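(* Let $f\colon\mathbb{R}\to\mathbb{R}$ be cliquish. Then $f$ is a Świątkowski function if and only if $f$ satisfies the condition $S(\mathbb{R},A,0)$ for every residual set $A\subset\mathbb{R}$.
   Context: $\mathrm{C}(f)$ denotes the set of continuity points of $f$. $f$ is cliquish if for all $a<b$ and every $\varepsilon>0$ there is a nondegenerate interval $I\subset(a,b)$ with $\operatorname{diam} f[I]<\varepsilon$. $f$ is a Świątkowski function if for all $a<b$ with $f(a)\neq f(b)$ there is $x\in(a,b)\cap\mathrm{C}(f)$ with $f(x)$ strictly between $f(a)$ and $f(b)$. For $a,b\in\mathbb{R}$, $I(a,b)$ denotes the open interval with end-points $a,b$. For $A\subset\mathbb{R}$, an interval $J$ and $\varepsilon\ge0$, $f$ satisfies $S(J,A,\varepsilon)$ if for all $a,b\in J$ with $f(a)<f(b)$ there exists $x\in A\cap I(a,b)$ with $f(x)\in(f(a)-\varepsilon,f(b)+\varepsilon)$. A set is residual if its complement is meager. *)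

theory Defs
  imports "HOL-Analysis.Analysis"
begin

definition nowhere_dense :: "real set \<Rightarrow> bool" where
  "nowhere_dense S \<longleftrightarrow> interior (closure S) = {}"

definition meager :: "real set \<Rightarrow> bool" where
  "meager A \<longleftrightarrow> (\<exists>N :: nat \<Rightarrow> real set. (\<forall>n. nowhere_dense (N n)) \<and> A \<subseteq> (\<Union>n. N n))"

definition residual :: "real set \<Rightarrow> bool" where
  "residual A \<longleftrightarrow> meager (- A)"

definition oint :: "real \<Rightarrow> real \<Rightarrow> real set" where
  "oint a b = {min a b<..<max a b}"

text \<open>Cliquish: every (a,b) contains a nondegenerate interval I with diam f[I] < eps.
  Nondegenerate intervals are taken open (every nondegenerate interval contains one);
  diam f[I] < eps is written as: sup of |f x - f y| over I is bounded by some d < eps.\<close>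
definition cliquish :: "(real \<Rightarrow> real) \<Rightarrow> bool" where
  "cliquish f \<longleftrightarrow> (\<forall>a b \<epsilon>. a < b \<longrightarrow> \<epsilon> > 0 \<longrightarrow>
     (\<exists>c d. a \<le> c \<and> c < d \<and> d \<le> b \<and>
        (\<exists>\<delta> < \<epsilon>. \<forall>x\<in>{c<..<d}. \<forall>y\<in>{c<..<d}. \<bar>f x - f y\<bar> \<le> \<delta>)))"

definition swiatkowski :: "(real \<Rightarrow> real) \<Rightarrow> bool" where
  "swiatkowski f \<longleftrightarrow> (\<forall>a b. a < b \<longrightarrow> f a \<noteq> f b \<longrightarrow>
     (\<exists>x\<in>{a<..<b}. isCont f x \<and> min (f a) (f b) < f x \<and> f x < max (f a) (f b)))"

definition condS :: "(real \<Rightarrow> real) \<Rightarrow> real set \<Rightarrow> real set \<Rightarrow> real \<Rightarrow> bool" where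
  "condS f J A \<epsilon> \<longleftrightarrow> (\<forall>a\<in>J. \<forall>b\<in>J. f a < f b \<longrightarrow>
     (\<exists>x\<in>A \<inter> oint a b. f a - \<epsilon> < f x \<and> f x < f b + \<epsilon>))"

end

theory Submission
  imports Defs
begin

text \<open>
  A discontinuity point of f has oscillation at least 1/(n+1) for some n, and cliquishness
  says exactly that each set of points of oscillation at least e avoids a subinterval of every
  interval, i.e. is nowhere dense; so the continuity points of a cliquish f form a residual set.
  By Baire's theorem residual sets are dense, so for a Swiatkowski function the continuity
  point x with f a < f x < f b can be moved into any residual A while keeping the value
  strictly between f a and f b. Conversely, S(\<real>, C(f), 0) is precisely the Swiatkowski
  property, and C(f) is residual.
\<close>

lemma residual_imp_dense:
  assumes "residual A"
  shows "closure A = UNIV"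
proof -
  obtain N :: "nat \<Rightarrow> real set" where N: "\<And>n. nowhere_dense (N n)" and cover: "- A \<subseteq> (\<Union>n. N n)"
    using assms unfolding residual_def meager_def by blast
  let ?G = "range (\<lambda>n. - closure (N n))"
  have "(UNIV :: real set) \<subseteq> closure (\<Inter>?G)"
  proof (rule Baire)
    fix T assume "T \<in> ?G"
    then obtain n where T: "T = - closure (N n)" by blast
    have "closure T = UNIV"
      using N[of n] unfolding T nowhere_dense_def by (simp add: closure_complement)
    then show "openin (top_of_set UNIV) T \<and> UNIV \<subseteq> closure T"
      using T by auto
  qed simp_all
  moreover have "\<Inter>?G \<subseteq> A"
  proof
    fix x assume "x \<in> \<Inter>?G"
    then have "x \<notin> N n" for n
      using closure_subset by blast
    with cover show "x \<in> A" by blast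
  qed
  ultimately show ?thesis
    using closure_mono[of "\<Inter>?G" A] by auto
qed

lemma dense_Int_open_nonempty:
  fixes A U :: "real set"
  assumes "closure A = UNIV" "open U" "U \<noteq> {}"
  shows "U \<inter> A \<noteq> {}"
  using assms open_Int_closure_eq_empty[of U A] by auto

definition oscillation_ge :: "(real \<Rightarrow> real) \<Rightarrow> real \<Rightarrow> real \<Rightarrow> bool" where
  "oscillation_ge f e x \<longleftrightarrow> (\<forall>r>0. \<exists>y z. dist y x < r \<and> dist z x < r \<and> e \<le> \<bar>f y - f z\<bar>)"

lemma oscillation_ge_mono:
  "oscillation_ge f e x \<Longrightarrow> e' \<le> e \<Longrightarrow> oscillation_ge f e' x"
  unfolding oscillation_ge_def by (meson order.trans)

lemma not_isCont_imp_oscillation_ge: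
  assumes "\<not> isCont f x"
  obtains e where "e > 0" "oscillation_ge f e x"
proof -
  obtain e where e: "e > 0" "\<forall>r>0. \<exists>y. dist y x < r \<and> e \<le> dist (f y) (f x)"
    using assms unfolding continuous_at_eps_delta by (meson not_le)
  have "oscillation_ge f e x"
    unfolding oscillation_ge_def
  proof (intro allI impI)
    fix r :: real assume "r > 0"
    then obtain y where "dist y x < r" "e \<le> dist (f y) (f x)" using e(2) by blast
    then show "\<exists>y z. dist y x < r \<and> dist z x < r \<and> e \<le> \<bar>f y - f z\<bar>"
      using \<open>r > 0\<close> by (intro exI[of _ y] exI[of _ x]) (simp add: dist_real_def)
  qed
  with e(1) show thesis by (rule that)
qed

lemma cliquish_avoids_oscillation_ge:
  assumes "cliquish f" "a < b" "e > 0"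
  obtains c d where "a \<le> c" "c < d" "d \<le> b" "{c<..<d} \<inter> {x. oscillation_ge f e x} = {}"
proof -
  obtain c d \<delta> where cd: "a \<le> c" "c < d" "d \<le> b" "\<delta> < e"
    and small: "\<forall>y\<in>{c<..<d}. \<forall>z\<in>{c<..<d}. \<bar>f y - f z\<bar> \<le> \<delta>"
    using assms unfolding cliquish_def by blast
  have "\<not> oscillation_ge f e p" if p: "p \<in> {c<..<d}" for p
  proof
    assume osc: "oscillation_ge f e p"
    obtain r where "r > 0" "ball p r \<subseteq> {c<..<d}"
      using p openE[OF open_greaterThanLessThan] by metis
    moreover obtain y z where "dist y p < r" "dist z p < r" "e \<le> \<bar>f y - f z\<bar>"
      using osc \<open>r > 0\<close> unfolding oscillation_ge_def by blast
    ultimately have "y \<in> {c<..<d}" "z \<in> {c<..<d}" "e \<le> \<bar>f y - f z\<bar>"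
      by (auto simp: dist_commute)
    moreover from small this(1,2) have "\<bar>f y - f z\<bar> \<le> \<delta>" by blast
    ultimately show False using cd(4) by linarith
  qed
  then have "{c<..<d} \<inter> {x. oscillation_ge f e x} = {}" by blast
  with cd(1-3) show thesis by (rule that)
qed

lemma cliquish_nowhere_dense_oscillation_ge:
  assumes "cliquish f" "e > 0"
  shows "nowhere_dense {x. oscillation_ge f e x}"
  unfolding nowhere_dense_def
proof (rule ccontr)
  let ?D = "{x. oscillation_ge f e x}"
  assume "interior (closure ?D) \<noteq> {}"
  then obtain x where "x \<in> interior (closure ?D)" by blast
  then obtain r where "r > 0" "ball x r \<subseteq> closure ?D"
    using mem_interior by blast
  then have "x - r < x + r" "{x - r<..<x + r} \<subseteq> closure ?D"
    by (simp_all add: ball_eq_greaterThanLessThan)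
  then obtain c d where "x - r \<le> c" "c < d" "d \<le> x + r" and disjoint: "{c<..<d} \<inter> ?D = {}"
    using cliquish_avoids_oscillation_ge[OF assms(1) _ assms(2)] by blast
  then have "(c + d) / 2 \<in> {c<..<d} \<inter> closure ?D"
    using \<open>{x - r<..<x + r} \<subseteq> closure ?D\<close> by auto
  with disjoint show False
    using open_Int_closure_eq_empty[OF open_greaterThanLessThan] by blast
qed

lemma cliquish_imp_residual_continuity_points:
  assumes "cliquish f"
  shows "residual {x. isCont f x}"
proof -
  let ?D = "\<lambda>n::nat. {x. oscillation_ge f (1 / (real n + 1)) x}"
  have "- {x. isCont f x} \<subseteq> (\<Union>n. ?D n)"
  proof
    fix x assume "x \<in> - {x. isCont f x}"
    then obtain e where "e > 0" "oscillation_ge f e x"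
      using not_isCont_imp_oscillation_ge by auto
    moreover obtain n where "1 / real (Suc n) < e"
      using nat_approx_posE[OF \<open>e > 0\<close>] by blast
    ultimately have "x \<in> ?D n"
      by (auto intro: oscillation_ge_mono simp: add.commute)
    then show "x \<in> (\<Union>n. ?D n)" by blast
  qed
  moreover have "nowhere_dense (?D n)" for n
    by (rule cliquish_nowhere_dense_oscillation_ge[OF assms]) simp
  ultimately show ?thesis
    unfolding residual_def meager_def by (intro exI[of _ ?D]) auto
qed

lemma swiatkowski_imp_condS_dense:
  assumes "swiatkowski f" "closure A = UNIV"
  shows "condS f UNIV A 0"
  unfolding condS_def
proof (intro ballI impI)
  fix a b assume ab: "f a < f b"
  then have "a \<noteq> b" by auto
  with ab have "min a b < max a b" "f (min a b) \<noteq> f (max a b)"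
    "min (f (min a b)) (f (max a b)) = f a" "max (f (min a b)) (f (max a b)) = f b"
    by (auto simp: min_def max_def)
  then obtain x where x: "x \<in> oint a b" "isCont f x" "f a < f x" "f x < f b"
    using assms(1) unfolding swiatkowski_def oint_def by metis
  define e where "e = min (f x - f a) (f b - f x)"
  have "e > 0" using x by (simp add: e_def)
  then obtain d where d: "d > 0" "\<forall>y. dist y x < d \<longrightarrow> dist (f y) (f x) < e"
    using x(2) unfolding continuous_at_eps_delta by blast
  have "ball x d \<inter> oint a b \<noteq> {}"
    using x(1) d(1) centre_in_ball by blast
  then have "ball x d \<inter> oint a b \<inter> A \<noteq> {}"
    by (rule dense_Int_open_nonempty[OF assms(2), rotated]) (simp add: oint_def open_Int)
  then obtain y where "y \<in> A \<inter> oint a b" "y \<in> ball x d"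
    by blast
  moreover have "dist (f y) (f x) < e"
    using d(2) calculation(2) by (metis dist_commute mem_ball)
  ultimately show "\<exists>y\<in>A \<inter> oint a b. f a - 0 < f y \<and> f y < f b + 0"
    unfolding e_def dist_real_def by (intro bexI[of _ y]) (auto simp: abs_less_iff)
qed

lemma condS_continuity_points_imp_swiatkowski:
  assumes "condS f UNIV {x. isCont f x} 0"
  shows "swiatkowski f"
  unfolding swiatkowski_def
proof (intro allI impI)
  fix a b :: real assume ab: "a < b" "f a \<noteq> f b"
  have between: "\<exists>x\<in>oint p q. isCont f x \<and> f p < f x \<and> f x < f q" if "f p < f q" for p q
    using assms that unfolding condS_def by auto
  have "oint a b = {a<..<b}" "oint b a = {a<..<b}"
    using ab(1) by (auto simp: oint_def)
  moreover have "f a < f b \<or> f b < f a"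
    using ab(2) by linarith
  ultimately show "\<exists>x\<in>{a<..<b}. isCont f x \<and> min (f a) (f b) < f x \<and> f x < max (f a) (f b)"
    using between[of a b] between[of b a]
    by (metis max.strict_order_iff min.strict_order_iff max.commute min.commute)
qed

theorem mainTheorem3:
  fixes f :: "real \<Rightarrow> real"
  assumes "cliquish f"
  shows "swiatkowski f \<longleftrightarrow> (\<forall>A. residual A \<longrightarrow> condS f UNIV A 0)"
proof
  assume "swiatkowski f"
  then show "\<forall>A. residual A \<longrightarrow> condS f UNIV A 0"
    by (simp add: swiatkowski_imp_condS_dense residual_imp_dense)
next
  assume "\<forall>A. residual A \<longrightarrow> condS f UNIV A 0"
  then have "condS f UNIV {x. isCont f x} 0"
    using cliquish_imp_residual_continuity_points[OF assms] by simp
  then show "swiatkowski f"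
    by (rule condS_continuity_points_imp_swiatkowski)
qed

end
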